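(* For every $n\ge1$ and every LHS assemblage $\{\rho_{b|y}\}$ on $\mathbb C^2$, $$|\mathsf W_n|\ \le\ \frac{\sin\left(\frac{\pi}{2}\mathsf T_n\right)}{n\sin\left(\frac{\pi}{2n}\right)}.$$
   Context: Let $\theta_y=y\pi/n$. An LHS assemblage on $\mathbb C^2$ with inputs $y\in\{0,\dots,n-1\}$ and outcomes $b\in\{0,1,\varnothing\}$ is $\rho_{b|y}=\sum_\lambda p(b|y,\lambda)\rho_\lambda$, where $\{\rho_\lambda\}$ is a finite family of positive semidefinite $2\times2$ matrices with $\sum_\lambda\mathrm{tr}\rho_\lambda=1$ and $p(b|y,\lambda)$ are conditional probabilities. With $Z,X$ the Pauli matrices, $\mathsf W_n:=\frac1n\sum_{y=0}^{n-1}\mathrm{tr}\big[(\cos\theta_y Z+\sin\theta_y X)(\rho_{0|y}-\rho_{1|y})\big]$ and $\mathsf T_n:=\frac1n\sum_{y=0}^{n-1}\mathrm{tr}(\rho_{0|y}+\rho_{1|y})$. *)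

theory Defs
  imports "HOL-Analysis.Analysis"
begin

type_synonym cmat2 = "complex^2^2"

definition adjoint2 :: "cmat2 \<Rightarrow> cmat2" where
  "adjoint2 A = (\<chi> i j. cnj (A $ j $ i))"

definition psd2 :: "cmat2 \<Rightarrow> bool" where
  "psd2 A \<longleftrightarrow> adjoint2 A = A \<and>
     (\<forall>v :: complex^2. let q = (\<Sum>i\<in>UNIV. cnj (v $ i) * (A *v v) $ i) in Im q = 0 \<and> Re q \<ge> 0)"

definition pauliZ :: cmat2 where
  "pauliZ = (\<chi> i j. if i = j then (if i = 0 then 1 else -1) else 0)"

definition pauliX :: cmat2 where
  "pauliX = (\<chi> i j. if i = j then 0 else 1)"

datatype outcome = Out0 | Out1 | OutNull

definition theta :: "nat \<Rightarrow> nat \<Rightarrow> real" where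
  "theta n y = real y * pi / real n"

definition LHS_assemblage :: "nat \<Rightarrow> (nat \<Rightarrow> outcome \<Rightarrow> cmat2) \<Rightarrow> bool" where
  "LHS_assemblage n rho \<longleftrightarrow>
     (\<exists>(L :: nat set) (sigma :: nat \<Rightarrow> cmat2) (p :: outcome \<Rightarrow> nat \<Rightarrow> nat \<Rightarrow> real).
        finite L \<and>
        (\<forall>l\<in>L. psd2 (sigma l)) \<and>
        (\<Sum>l\<in>L. trace (sigma l)) = 1 \<and>
        (\<forall>y<n. \<forall>l\<in>L. (\<forall>b. p b y l \<ge> 0) \<and> p Out0 y l + p Out1 y l + p OutNull y l = 1) \<and>
        (\<forall>y<n. \<forall>b. rho y b = (\<Sum>l\<in>L. p b y l *\<^sub>R sigma l)))"

definition W_n :: "nat \<Rightarrow> (nat \<Rightarrow> outcome \<Rightarrow> cmat2) \<Rightarrow> complex" where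
  "W_n n rho = (1 / of_nat n) * (\<Sum>y<n.
      trace ((cos (theta n y) *\<^sub>R pauliZ + sin (theta n y) *\<^sub>R pauliX)
             ** (rho y Out0 - rho y Out1)))"

definition T_n :: "nat \<Rightarrow> (nat \<Rightarrow> outcome \<Rightarrow> cmat2) \<Rightarrow> complex" where
  "T_n n rho = (1 / of_nat n) * (\<Sum>y<n. trace (rho y Out0 + rho y Out1))"

end

theory Submission
  imports Defs
begin

(* Write the assemblage as a mixture of hidden states rho_lambda with weights t_lambda = tr rho_lambda.
   A hidden state with Bloch vector of length r <= t_lambda at angle phi contributes
   sum_y d_y r cos(theta_y - phi) to n W_n, where |d_y| <= q_y = p(0|y,lambda) + p(1|y,lambda) <= 1.
   Modulo pi the angles theta_y - phi are n points of [-pi/2, pi/2] at mutual distance >= h = pi/n.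
   Since 2 sin(h/2) cos x is the integral of cos over [x - h/2, x + h/2], and for 0 <= w <= 1
   w cos t <= max 0 (cos t - cos c) + w cos c, summing over these disjoint intervals gives
   sin(h/2) sum_y q_y |cos(theta_y - phi)| <= sin c - c cos c + (h/2) (sum_y q_y) cos c = sin c
   for c = (h/2) sum_y q_y = (pi/2) T_lambda, T_lambda the mean of the q_y ("bathtub principle").
   Finally sum_lambda t_lambda sin(pi/2 T_lambda) <= sin(pi/2 T_n) by concavity of sin on [0, pi/2]. *)

definition tilted_sin :: "real \<Rightarrow> real \<Rightarrow> real" where
  "tilted_sin c x = sin x - cos c * x"

(* For 0 <= c <= pi, on [-pi, pi] this is a primitive of max 0 (cos t - cos c). *)
definition clamped_tilted_sin :: "real \<Rightarrow> real \<Rightarrow> real" where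
  "clamped_tilted_sin c x = tilted_sin c (max (-c) (min c x))"

lemma cos_ge_cos_if_abs_le:
  assumes "c \<le> pi" "\<bar>x\<bar> \<le> c"
  shows "cos c \<le> cos x"
  using cos_monotone_0_pi_le[of "\<bar>x\<bar>" c] assms by simp

lemma cos_le_cos_if_le_abs:
  assumes "0 \<le> c" "c \<le> \<bar>x\<bar>" "\<bar>x\<bar> \<le> pi"
  shows "cos x \<le> cos c"
  using cos_monotone_0_pi_le[of c "\<bar>x\<bar>"] assms by simp

lemma has_real_derivative_tilted_sin: "(tilted_sin c has_real_derivative cos x - cos c) (at x)"
  unfolding tilted_sin_def by (auto intro!: derivative_eq_intros)

lemma tilted_sin_mono:
  assumes "c \<le> pi" "-c \<le> a" "a \<le> b" "b \<le> c"
  shows "tilted_sin c a \<le> tilted_sin c b"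
  using \<open>a \<le> b\<close>
proof (rule DERIV_nonneg_imp_nondecreasing)
  fix x assume "a \<le> x" "x \<le> b"
  then have "cos c \<le> cos x" using assms by (intro cos_ge_cos_if_abs_le) auto
  then show "\<exists>y. (tilted_sin c has_real_derivative y) (at x) \<and> 0 \<le> y"
    by (intro exI[of _ "cos x - cos c"]) (simp add: has_real_derivative_tilted_sin)
qed

lemma tilted_sin_antimono:
  assumes "0 \<le> c" "a \<le> b" "\<And>x. a \<le> x \<Longrightarrow> x \<le> b \<Longrightarrow> c \<le> \<bar>x\<bar> \<and> \<bar>x\<bar> \<le> pi"
  shows "tilted_sin c b \<le> tilted_sin c a"
  using \<open>a \<le> b\<close>
proof (rule DERIV_nonpos_imp_nonincreasing)
  fix x assume "a \<le> x" "x \<le> b"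
  then have "cos x \<le> cos c" using assms by (intro cos_le_cos_if_le_abs) auto
  then show "\<exists>y. (tilted_sin c has_real_derivative y) (at x) \<and> y \<le> 0"
    by (intro exI[of _ "cos x - cos c"]) (simp add: has_real_derivative_tilted_sin)
qed

lemma mono_clamped_tilted_sin:
  assumes "0 \<le> c" "c \<le> pi"
  shows "mono (clamped_tilted_sin c)"
  unfolding clamped_tilted_sin_def using assms by (intro monoI tilted_sin_mono) auto

lemma clamped_tilted_sin_bounds:
  assumes "0 \<le> c" "c \<le> pi"
  shows "tilted_sin c (-c) \<le> clamped_tilted_sin c x" "clamped_tilted_sin c x \<le> tilted_sin c c"
  unfolding clamped_tilted_sin_def using assms by (auto intro!: tilted_sin_mono)

lemma tilted_sin_increment_le_clamped:
  assumes "0 \<le> c" "c \<le> pi" "-pi \<le> a" "a \<le> b" "b \<le> pi"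
  shows "tilted_sin c b - tilted_sin c a \<le> clamped_tilted_sin c b - clamped_tilted_sin c a"
proof -
  define D where "D x = tilted_sin c x - clamped_tilted_sin c x" for x
  have D_nonneg: "0 \<le> D x" if "-pi \<le> x" "x \<le> c" for x
  proof (cases "x \<le> -c")
    case True
    then show ?thesis
      using tilted_sin_antimono[of c x "-c"] assms that unfolding D_def clamped_tilted_sin_def by auto
  qed (use that in \<open>auto simp: D_def clamped_tilted_sin_def\<close>)
  have D_nonpos: "D x \<le> 0" if "-c \<le> x" "x \<le> pi" for x
  proof (cases "c \<le> x")
    case True
    then show ?thesis
      using tilted_sin_antimono[of c c x] assms that unfolding D_def clamped_tilted_sin_def by auto
  qed (use that in \<open>auto simp: D_def clamped_tilted_sin_def\<close>)
  have "D b \<le> D a"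
  proof -
    consider "b \<le> -c" | "c \<le> a" | "a \<le> c" "-c \<le> b" by linarith
    then show ?thesis
    proof cases
      case 1
      then show ?thesis
        using tilted_sin_antimono[of c a b] assms unfolding D_def clamped_tilted_sin_def by auto
    next
      case 2
      then show ?thesis
        using tilted_sin_antimono[of c a b] assms unfolding D_def clamped_tilted_sin_def by auto
    next
      case 3
      then show ?thesis using D_nonneg[of a] D_nonpos[of b] assms by linarith
    qed
  qed
  then show ?thesis unfolding D_def by linarith
qed

lemma weighted_sin_increment_le:
  assumes "0 \<le> c" "c \<le> pi" "0 \<le> h" "h \<le> pi" "\<bar>x\<bar> \<le> pi/2" "0 \<le> w" "w \<le> 1"
  shows "w * (sin (x + h/2) - sin (x - h/2))
           \<le> clamped_tilted_sin c (x + h/2) - clamped_tilted_sin c (x - h/2) + w * h * cos c"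
proof -
  define \<Delta> where "\<Delta> = sin (x + h/2) - sin (x - h/2) - h * cos c"
  define \<Delta>G where "\<Delta>G = clamped_tilted_sin c (x + h/2) - clamped_tilted_sin c (x - h/2)"
  have "\<Delta> \<le> \<Delta>G"
    using tilted_sin_increment_le_clamped[of c "x - h/2" "x + h/2"] assms
    unfolding \<Delta>_def \<Delta>G_def tilted_sin_def by (simp add: algebra_simps)
  moreover have "0 \<le> \<Delta>G"
    using mono_clamped_tilted_sin[of c] assms unfolding \<Delta>G_def by (simp add: monoD)
  moreover have "w * \<Delta> \<le> max 0 \<Delta>"
    using assms mult_left_le_one_le[of \<Delta> w] mult_nonneg_nonpos[of w \<Delta>] by (cases "0 \<le> \<Delta>") auto
  ultimately have "w * \<Delta> \<le> \<Delta>G" by linarith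
  then show ?thesis unfolding \<Delta>_def \<Delta>G_def by (simp add: algebra_simps)
qed

lemma sum_increments_separated_le:
  fixes f :: "real \<Rightarrow> real"
  assumes "mono f" "\<And>x. m \<le> f x" "\<And>x. f x \<le> M" "finite X"
    and separated: "\<And>x y. x \<in> X \<Longrightarrow> y \<in> X \<Longrightarrow> x \<noteq> y \<Longrightarrow> h \<le> \<bar>x - y\<bar>"
  shows "(\<Sum>x\<in>X. f (x + h/2) - f (x - h/2)) \<le> M - m"
proof -
  have "(\<Sum>x\<in>A. f (x + h/2) - f (x - h/2)) \<le> f b - m"
    if "A \<subseteq> X" "\<And>x. x \<in> A \<Longrightarrow> x + h/2 \<le> b" for A b
    using finite_subset[OF that(1) \<open>finite X\<close>] that
  proof (induction A arbitrary: b rule: finite_remove_induct)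
    case empty
    then show ?case using assms(2)[of b] by simp
  next
    case (remove A)
    define a where "a = Max A"
    have a: "a \<in> A" "\<And>x. x \<in> A \<Longrightarrow> x \<le> a"
      using remove.hyps unfolding a_def by auto
    have "x + h/2 \<le> a - h/2" if "x \<in> A - {a}" for x
    proof -
      have "x \<le> a" "x \<in> X" "a \<in> X" using a that remove.prems(1) by auto
      then show ?thesis using separated[of x a] that by auto
    qed
    then have "(\<Sum>x\<in>A - {a}. f (x + h/2) - f (x - h/2)) \<le> f (a - h/2) - m"
      using remove.IH[OF a(1)] remove.prems(1) by blast
    moreover have "f (a + h/2) \<le> f b"
      using \<open>mono f\<close> remove.prems(2)[OF a(1)] by (simp add: monoD)
    ultimately show ?case
      using sum.remove[OF \<open>finite A\<close> a(1), of "\<lambda>x. f (x + h/2) - f (x - h/2)"] by linarith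
  qed
  from this[of X "Max (insert 0 X) + h/2"] show ?thesis
    using assms(3)[of "Max (insert 0 X) + h/2"] \<open>finite X\<close> by simp
qed

lemma abs_cos_add_int_pi: "\<bar>cos (x + of_int k * pi)\<bar> = \<bar>cos x\<bar>"
proof -
  have sin_kpi: "sin (of_int k * pi) = 0" using sin_zero_iff_int2 by blast
  then have "\<bar>cos (of_int k * pi)\<bar> = 1"
    using sin_cos_squared_add[of "of_int k * pi"] by (auto simp: power2_eq_1_iff)
  then show ?thesis unfolding cos_add sin_kpi by (simp add: abs_mult)
qed

lemma abs_cos_grid_reduction:
  assumes "n \<ge> 1"
  obtains x :: "nat \<Rightarrow> real" where
    "\<And>y. y < n \<Longrightarrow> \<bar>cos (real y * pi / real n - \<phi>)\<bar> = cos (x y)"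
    "\<And>y. y < n \<Longrightarrow> \<bar>x y\<bar> \<le> pi/2"
    "\<And>y y'. y < n \<Longrightarrow> y' < n \<Longrightarrow> y \<noteq> y' \<Longrightarrow> pi / real n \<le> \<bar>x y - x y'\<bar>"
proof
  define t where "t y = real y * pi / real n - \<phi>" for y
  define k where "k y = round (t y / pi)" for y
  define x where "x y = t y - of_int (k y) * pi" for y
  show x_bound: "\<bar>x y\<bar> \<le> pi/2" for y
  proof -
    have "\<bar>t y / pi - of_int (k y)\<bar> * pi \<le> 1/2 * pi"
      using of_int_round_abs_le[of "t y / pi"] unfolding k_def by (simp add: abs_minus_commute)
    also have "(t y / pi - of_int (k y)) * pi = x y"
      unfolding x_def by (simp add: field_simps)
    then have "\<bar>t y / pi - of_int (k y)\<bar> * pi = \<bar>x y\<bar>"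
      by (simp add: abs_mult_pos)
    finally show ?thesis by simp
  qed
  show "\<bar>cos (real y * pi / real n - \<phi>)\<bar> = cos (x y)" for y
  proof -
    have "0 \<le> cos (x y)" using x_bound[of y] by (intro cos_ge_zero) auto
    moreover have "t y = x y + of_int (k y) * pi" unfolding x_def by simp
    ultimately show ?thesis using abs_cos_add_int_pi[of "x y" "k y"] unfolding t_def by simp
  qed
  show "pi / real n \<le> \<bar>x y - x y'\<bar>" if "y < n" "y' < n" "y \<noteq> y'" for y y'
  proof -
    define m where "m = int y - int y' - int n * (k y - k y')"
    have "m \<noteq> 0"
    proof
      assume "m = 0"
      then have "\<bar>int n * (k y - k y')\<bar> < int n * 1" using that unfolding m_def by linarith
      then have "k y = k y'" using assms by (simp add: abs_mult)
      then show False using \<open>m = 0\<close> that unfolding m_def by simp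
    qed
    have "x y - x y' = pi / real n * of_int m"
      using assms unfolding x_def t_def m_def by (simp add: field_simps)
    then have "\<bar>x y - x y'\<bar> = pi / real n * \<bar>of_int m\<bar>" by (simp add: abs_mult)
    moreover have "1 \<le> \<bar>real_of_int m\<bar>" using \<open>m \<noteq> 0\<close> by linarith
    ultimately show ?thesis using mult_left_mono[of 1 "\<bar>of_int m\<bar>" "pi / real n"] by simp
  qed
qed

lemma sum_weighted_cos_separated_le:
  fixes x w :: "'i \<Rightarrow> real"
  assumes "finite I" "0 < h" "h \<le> pi"
    and x_bound: "\<And>i. i \<in> I \<Longrightarrow> \<bar>x i\<bar> \<le> pi/2"
    and separated: "\<And>i j. i \<in> I \<Longrightarrow> j \<in> I \<Longrightarrow> i \<noteq> j \<Longrightarrow> h \<le> \<bar>x i - x j\<bar>"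
    and w: "\<And>i. i \<in> I \<Longrightarrow> 0 \<le> w i \<and> w i \<le> 1"
    and c_le: "h/2 * (\<Sum>i\<in>I. w i) \<le> pi"
  shows "sin (h/2) * (\<Sum>i\<in>I. w i * cos (x i)) \<le> sin (h/2 * (\<Sum>i\<in>I. w i))"
proof -
  define c where "c = h/2 * (\<Sum>i\<in>I. w i)"
  define G where "G = clamped_tilted_sin c"
  have c: "0 \<le> c" "c \<le> pi"
    using c_le \<open>0 < h\<close> w unfolding c_def by (auto intro!: mult_nonneg_nonneg sum_nonneg)
  have "inj_on x I"
    using separated \<open>0 < h\<close> by (intro inj_onI) (metis abs_zero diff_self not_le)
  then have "(\<Sum>i\<in>I. G (x i + h/2) - G (x i - h/2)) = (\<Sum>t\<in>x ` I. G (t + h/2) - G (t - h/2))"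
    by (simp add: sum.reindex)
  also have "\<dots> \<le> tilted_sin c c - tilted_sin c (-c)"
    using mono_clamped_tilted_sin[OF c] clamped_tilted_sin_bounds[OF c] separated \<open>finite I\<close>
    unfolding G_def by (intro sum_increments_separated_le) auto
  also have "\<dots> = 2 * sin c - 2 * c * cos c" unfolding tilted_sin_def by simp
  finally have increments: "(\<Sum>i\<in>I. G (x i + h/2) - G (x i - h/2)) \<le> 2 * sin c - 2 * c * cos c" .
  have "2 * sin (h/2) * (\<Sum>i\<in>I. w i * cos (x i)) = (\<Sum>i\<in>I. w i * (sin (x i + h/2) - sin (x i - h/2)))"
    by (simp add: sum_distrib_left sin_add sin_diff algebra_simps)
  also have "\<dots> \<le> (\<Sum>i\<in>I. G (x i + h/2) - G (x i - h/2) + w i * h * cos c)"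
    using weighted_sin_increment_le[OF c less_imp_le[OF \<open>0 < h\<close>] \<open>h \<le> pi\<close>] x_bound w
    unfolding G_def by (intro sum_mono) auto
  also have "\<dots> = (\<Sum>i\<in>I. G (x i + h/2) - G (x i - h/2)) + 2 * c * cos c"
    unfolding c_def by (simp add: sum.distrib sum_distrib_left sum_distrib_right mult_ac)
  also have "\<dots> \<le> 2 * sin c"
    using increments by linarith
  finally show ?thesis unfolding c_def by simp
qed

lemma average_in_unit_interval:
  fixes q :: "nat \<Rightarrow> real"
  assumes "n \<ge> 1" "\<And>y. y < n \<Longrightarrow> 0 \<le> q y \<and> q y \<le> 1"
  shows "(\<Sum>y<n. q y) / real n \<in> {0..1}"
proof -
  have "0 \<le> (\<Sum>y<n. q y)" "(\<Sum>y<n. q y) \<le> real n"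
    using assms(2) sum_mono[of "{..<n}" q "\<lambda>_. 1"] by (auto intro: sum_nonneg)
  then show ?thesis using assms(1) by (simp add: divide_le_eq)
qed

lemma sum_weighted_abs_cos_grid_le:
  fixes w :: "nat \<Rightarrow> real"
  assumes n: "n \<ge> 1" and w: "\<And>y. y < n \<Longrightarrow> 0 \<le> w y \<and> w y \<le> 1"
  shows "(\<Sum>y<n. w y * \<bar>cos (real y * pi / real n - \<phi>)\<bar>)
           \<le> sin (pi/2 * ((\<Sum>y<n. w y) / real n)) / sin (pi / (2 * real n))"
proof -
  obtain x where abs_cos: "\<And>y. y < n \<Longrightarrow> \<bar>cos (real y * pi / real n - \<phi>)\<bar> = cos (x y)"
    and x_bound: "\<And>y. y < n \<Longrightarrow> \<bar>x y\<bar> \<le> pi/2"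
    and separated: "\<And>y y'. y < n \<Longrightarrow> y' < n \<Longrightarrow> y \<noteq> y' \<Longrightarrow> pi / real n \<le> \<bar>x y - x y'\<bar>"
    using abs_cos_grid_reduction[OF n] by metis
  define h where "h = pi / real n"
  have h: "0 < h" "h \<le> pi" unfolding h_def using n by (auto simp: divide_le_eq)
  have c_eq: "h/2 * (\<Sum>y<n. w y) = pi/2 * ((\<Sum>y<n. w y) / real n)" unfolding h_def by simp
  have mean: "(\<Sum>y<n. w y) / real n \<in> {0..1}" using average_in_unit_interval[OF n w] .
  have "pi/2 * ((\<Sum>y<n. w y) / real n) \<le> pi/2 * 1" by (rule mult_left_mono) (use mean in auto)
  then have "h/2 * (\<Sum>y<n. w y) \<le> pi" unfolding c_eq using pi_gt_zero by linarith
  then have "sin (h/2) * (\<Sum>y<n. w y * cos (x y)) \<le> sin (h/2 * (\<Sum>y<n. w y))"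
    using h x_bound separated[folded h_def] w by (intro sum_weighted_cos_separated_le) auto
  moreover have "0 < sin (h/2)" using h by (intro sin_gt_zero) auto
  moreover have "h/2 = pi / (2 * real n)" unfolding h_def by simp
  ultimately show ?thesis
    using abs_cos unfolding c_eq by (simp add: pos_le_divide_eq mult.commute)
qed

definition pauli_axis :: "real \<Rightarrow> cmat2" where
  "pauli_axis \<theta> = cos \<theta> *\<^sub>R pauliZ + sin \<theta> *\<^sub>R pauliX"

definition bloch_vector :: "cmat2 \<Rightarrow> complex" where
  "bloch_vector S = Complex (Re (S$2$2 - S$1$1)) (2 * Re (S$1$2))"

(* In the index type 2 we have 0 = 2, so pauliZ = diag(-1, 1). *)
lemma trace_pauli_axis_mult:
  "trace (pauli_axis \<theta> ** S) = of_real (cos \<theta>) * (S$2$2 - S$1$1) + of_real (sin \<theta>) * (S$1$2 + S$2$1)"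
  unfolding pauli_axis_def
  by (simp add: trace_def sum_2 matrix_matrix_mult_def pauliZ_def pauliX_def)
    (simp add: scaleR_conv_of_real algebra_simps)

lemma trace_pauli_axis_mult_hermitian:
  assumes "adjoint2 S = S"
  shows "trace (pauli_axis \<theta> ** S) = of_real (cmod (bloch_vector S) * cos (\<theta> - Arg (bloch_vector S)))"
proof -
  define z where "z = bloch_vector S"
  have "S$i$i = cnj (S$i$i)" "S$2$1 = cnj (S$1$2)" for i
    using arg_cong[OF assms, of "\<lambda>A. A$i$i"] arg_cong[OF assms, of "\<lambda>A. A$2$1"]
    unfolding adjoint2_def by simp_all
  then have "trace (pauli_axis \<theta> ** S) = of_real (cos \<theta> * Re z + sin \<theta> * Im z)"
    unfolding trace_pauli_axis_mult z_def bloch_vector_def by (simp add: complex_eq_iff)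
  also have "cos \<theta> * Re z + sin \<theta> * Im z = cmod z * cos (\<theta> - Arg z)"
  proof -
    have polar: "Re z = cmod z * cos (Arg z)" "Im z = cmod z * sin (Arg z)"
      using arg_cong[OF rcis_cmod_Arg[of z], of Re] arg_cong[OF rcis_cmod_Arg[of z], of Im] by simp_all
    show ?thesis unfolding cos_diff polar by (simp add: algebra_simps)
  qed
  finally show ?thesis unfolding z_def .
qed

lemma psd2_quadratic_form:
  fixes a b :: complex
  assumes "psd2 S"
  defines "q \<equiv> cnj a * (S$1$1 * a + S$1$2 * b) + cnj b * (S$2$1 * a + S$2$2 * b)"
  shows "Im q = 0" "0 \<le> Re q"
proof -
  define v :: "complex^2" where "v = (\<chi> i. if i = 1 then a else b)"
  have "(\<Sum>i\<in>UNIV. cnj (v $ i) * (S *v v) $ i) = q"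
    unfolding q_def v_def by (simp add: sum_2 matrix_vector_mult_def)
  then show "Im q = 0" "0 \<le> Re q"
    using assms(1) unfolding psd2_def Let_def by metis+
qed

lemma psd2_entries:
  assumes "psd2 S"
  shows "S$2$1 = cnj (S$1$2)" "S$1$1 = of_real (Re (S$1$1))" "S$2$2 = of_real (Re (S$2$2))"
    "0 \<le> Re (S$1$1)" "0 \<le> Re (S$2$2)" "(cmod (S$1$2))\<^sup>2 \<le> Re (S$1$1) * Re (S$2$2)"
proof -
  have "adjoint2 S $ 2 $ 1 = S $ 2 $ 1" using assms unfolding psd2_def by simp
  then show S21: "S$2$1 = cnj (S$1$2)" unfolding adjoint2_def by simp
  obtain P P' where P: "S$1$1 = Complex P P'" by (cases "S$1$1")
  obtain R R' where R: "S$2$2 = Complex R R'" by (cases "S$2$2")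
  obtain u v where w: "S$1$2 = Complex u v" by (cases "S$1$2")
  note form = psd2_quadratic_form[OF assms, unfolded S21 P R w]
  have "P' = 0" "0 \<le> P" using form[of 1 0] by auto
  moreover have "R' = 0" "0 \<le> R" using form[of 0 1] by auto
  ultimately show "S$1$1 = of_real (Re (S$1$1))" "S$2$2 = of_real (Re (S$2$2))"
    "0 \<le> Re (S$1$1)" "0 \<le> Re (S$2$2)"
    unfolding P R by (simp_all add: complex_eq_iff)
  have det_R: "0 \<le> R * (P * R - (u\<^sup>2 + v\<^sup>2))"
    using form(2)[of "complex_of_real R" "- Complex u (- v)"] \<open>P' = 0\<close> \<open>R' = 0\<close>
    by (simp add: power2_eq_square algebra_simps)
  have det_P: "0 \<le> P * (P * R - (u\<^sup>2 + v\<^sup>2))"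
    using form(2)[of "- Complex u v" "complex_of_real P"] \<open>P' = 0\<close> \<open>R' = 0\<close>
    by (simp add: power2_eq_square algebra_simps)
  have trace_zero_case: "0 \<le> P - 2 * (u\<^sup>2 + v\<^sup>2) + R * (u\<^sup>2 + v\<^sup>2)"
    using form(2)[of 1 "- Complex u (- v)"] \<open>P' = 0\<close> \<open>R' = 0\<close>
    by (simp add: power2_eq_square algebra_simps)
  have "u\<^sup>2 + v\<^sup>2 \<le> P * R"
  proof (cases "0 < P + R")
    case True
    have "0 \<le> (P + R) * (P * R - (u\<^sup>2 + v\<^sup>2))" using det_R det_P by (simp add: algebra_simps)
    then show ?thesis using True by (simp add: zero_le_mult_iff)
  next
    case False
    then have "P = 0" "R = 0" using \<open>0 \<le> P\<close> \<open>0 \<le> R\<close> by auto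
    then show ?thesis using trace_zero_case by (simp add: add_nonneg_nonneg)
  qed
  then show "(cmod (S$1$2))\<^sup>2 \<le> Re (S$1$1) * Re (S$2$2)"
    unfolding P R w by (simp add: cmod_def)
qed

lemma psd2_trace_real: "psd2 S \<Longrightarrow> trace S = of_real (Re (trace S))"
  using psd2_entries(2,3)[of S] by (simp add: trace_def sum_2 complex_eq_iff)

lemma psd2_bloch_vector_le_trace:
  assumes "psd2 S"
  shows "cmod (bloch_vector S) \<le> Re (trace S)"
proof -
  define P R u where "P = Re (S$1$1)" "R = Re (S$2$2)" "u = Re (S$1$2)"
  have "u\<^sup>2 \<le> (cmod (S$1$2))\<^sup>2"
    using power_mono[OF abs_Re_le_cmod[of "S$1$2"], of 2] unfolding P_R_u_def by simp
  then have "0 \<le> P" "0 \<le> R" "u\<^sup>2 \<le> P * R"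
    using psd2_entries(4-6)[OF assms] unfolding P_R_u_def by auto
  then have "(cmod (bloch_vector S))\<^sup>2 \<le> (P + R)\<^sup>2"
    unfolding bloch_vector_def P_R_u_def cmod_power2 by (simp add: power2_eq_square algebra_simps)
  moreover have "Re (trace S) = P + R" unfolding P_R_u_def by (simp add: trace_def sum_2)
  ultimately show ?thesis using \<open>0 \<le> P\<close> \<open>0 \<le> R\<close> by (simp add: power2_le_iff_abs_le)
qed

lemma trace_scaleR: "trace (c *\<^sub>R A) = of_real c * trace (A :: complex^'n^'n)"
  unfolding trace_def vector_scaleR_component by (simp add: scaleR_conv_of_real sum_distrib_left)

lemma trace_matrix_mult_sum_scaleR:
  fixes M :: "complex^'n^'n"
  shows "trace (M ** (\<Sum>l\<in>L. c l *\<^sub>R S l)) = (\<Sum>l\<in>L. of_real (c l) * trace (M ** S l))"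
proof (induction L rule: infinite_finite_induct)
  case (insert l L)
  then show ?case
    by (simp add: matrix_add_ldistrib trace_add matrix_scalar_ac scalar_matrix_assoc[symmetric] trace_scaleR)
qed (simp_all add: trace_def)

lemma trace_sum_scaleR:
  "trace (\<Sum>l\<in>L. c l *\<^sub>R S l) = (\<Sum>l\<in>L. of_real (c l) * trace (S l :: complex^'n^'n))"
  using trace_matrix_mult_sum_scaleR[of "mat 1" c S L] by simp

lemma concave_on_sin_half_pi: "concave_on {0..1} (\<lambda>x. sin (pi/2 * x))"
  by (rule f''_le0_imp_concave[where f'="\<lambda>x. pi/2 * cos (pi/2 * x)" and f''="\<lambda>x. - (pi * pi/4) * sin (pi/2 * x)"])
     (auto intro!: derivative_eq_intros mult_nonneg_nonneg sin_ge_zero simp: algebra_simps)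

lemma abs_sum_trace_pauli_axis_le:
  assumes "psd2 S" "n \<ge> 1" and dq: "\<And>y. y < n \<Longrightarrow> \<bar>d y\<bar> \<le> q y \<and> q y \<le> 1"
  shows "\<bar>\<Sum>y<n. d y * Re (trace (pauli_axis (theta n y) ** S))\<bar>
           \<le> Re (trace S) * (sin (pi/2 * ((\<Sum>y<n. q y) / real n)) / sin (pi / (2 * real n)))"
proof -
  define r where "r = cmod (bloch_vector S)"
  define \<phi> where "\<phi> = Arg (bloch_vector S)"
  define B where "B = sin (pi/2 * ((\<Sum>y<n. q y) / real n)) / sin (pi / (2 * real n))"
  have hermitian: "adjoint2 S = S" using assms(1) unfolding psd2_def by blast
  have Re_trace: "Re (trace (pauli_axis (theta n y) ** S)) = r * cos (real y * pi / real n - \<phi>)" for y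
    using trace_pauli_axis_mult_hermitian[OF hermitian] unfolding r_def \<phi>_def theta_def by simp
  have q_nonneg: "0 \<le> q y" if "y < n" for y using dq[OF that] by linarith
  have grid_bound: "(\<Sum>y<n. q y * \<bar>cos (real y * pi / real n - \<phi>)\<bar>) \<le> B"
    unfolding B_def using dq q_nonneg by (intro sum_weighted_abs_cos_grid_le[OF assms(2)]) auto
  have "0 \<le> B" using q_nonneg by (intro order.trans[OF sum_nonneg grid_bound]) auto
  have "\<bar>\<Sum>y<n. d y * Re (trace (pauli_axis (theta n y) ** S))\<bar>
          \<le> (\<Sum>y<n. r * (q y * \<bar>cos (real y * pi / real n - \<phi>)\<bar>))"
    unfolding Re_trace
  proof (intro order.trans[OF sum_abs] sum_mono)
    fix y assume "y \<in> {..<n}"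
    then have "\<bar>d y\<bar> * \<bar>cos (real y * pi / real n - \<phi>)\<bar> \<le> q y * \<bar>cos (real y * pi / real n - \<phi>)\<bar>"
      using dq by (intro mult_right_mono) auto
    then have "r * (\<bar>d y\<bar> * \<bar>cos (real y * pi / real n - \<phi>)\<bar>) \<le> r * (q y * \<bar>cos (real y * pi / real n - \<phi>)\<bar>)"
      unfolding r_def by (intro mult_left_mono) auto
    then show "\<bar>d y * (r * cos (real y * pi / real n - \<phi>))\<bar> \<le> r * (q y * \<bar>cos (real y * pi / real n - \<phi>)\<bar>)"
      unfolding r_def by (simp add: abs_mult mult_ac)
  qed
  also have "\<dots> \<le> r * B"
    unfolding sum_distrib_left[symmetric] using grid_bound r_def by (intro mult_left_mono) auto
  also have "\<dots> \<le> Re (trace S) * B"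
    using psd2_bloch_vector_le_trace[OF assms(1)] \<open>0 \<le> B\<close> unfolding r_def by (intro mult_right_mono)
  finally show ?thesis unfolding B_def .
qed

lemma W_n_eq_sum_hidden_states:
  assumes "\<forall>y<n. \<forall>b. rho y b = (\<Sum>l\<in>L. p b y l *\<^sub>R \<sigma> l)" "\<forall>l\<in>L. psd2 (\<sigma> l)"
  shows "W_n n rho = of_real ((\<Sum>l\<in>L. \<Sum>y<n.
           (p Out0 y l - p Out1 y l) * Re (trace (pauli_axis (theta n y) ** \<sigma> l))) / real n)"
proof -
  have real: "trace (pauli_axis \<theta> ** \<sigma> l) = of_real (Re (trace (pauli_axis \<theta> ** \<sigma> l)))"
    if "l \<in> L" for l \<theta>
    using assms(2) that trace_pauli_axis_mult_hermitian[of "\<sigma> l" \<theta>] unfolding psd2_def by auto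
  have "trace (pauli_axis (theta n y) ** (rho y Out0 - rho y Out1))
      = of_real (\<Sum>l\<in>L. (p Out0 y l - p Out1 y l) * Re (trace (pauli_axis (theta n y) ** \<sigma> l)))"
    if "y < n" for y
  proof -
    have "rho y Out0 - rho y Out1 = (\<Sum>l\<in>L. (p Out0 y l - p Out1 y l) *\<^sub>R \<sigma> l)"
      using assms(1) that by (simp add: sum_subtractf[symmetric] scaleR_diff_left)
    then show ?thesis using real by (simp add: trace_matrix_mult_sum_scaleR cong: sum.cong)
  qed
  then have "(\<Sum>y<n. trace (pauli_axis (theta n y) ** (rho y Out0 - rho y Out1)))
      = of_real (\<Sum>y<n. \<Sum>l\<in>L. (p Out0 y l - p Out1 y l) * Re (trace (pauli_axis (theta n y) ** \<sigma> l)))"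
    by simp
  then have "W_n n rho = of_real ((\<Sum>y<n. \<Sum>l\<in>L.
      (p Out0 y l - p Out1 y l) * Re (trace (pauli_axis (theta n y) ** \<sigma> l))) / real n)"
    unfolding W_n_def pauli_axis_def[symmetric] by (simp add: divide_inverse mult.commute)
  then show ?thesis by (simp add: sum.swap[of _ L])
qed

lemma Re_T_n_eq_sum_hidden_states:
  assumes "\<forall>y<n. \<forall>b. rho y b = (\<Sum>l\<in>L. p b y l *\<^sub>R \<sigma> l)" "\<forall>l\<in>L. psd2 (\<sigma> l)"
  shows "Re (T_n n rho) = (\<Sum>l\<in>L. Re (trace (\<sigma> l)) * ((\<Sum>y<n. p Out0 y l + p Out1 y l) / real n))"
proof -
  have "trace (rho y Out0 + rho y Out1) = of_real (\<Sum>l\<in>L. (p Out0 y l + p Out1 y l) * Re (trace (\<sigma> l)))"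
    if "y < n" for y
  proof -
    have "rho y Out0 + rho y Out1 = (\<Sum>l\<in>L. (p Out0 y l + p Out1 y l) *\<^sub>R \<sigma> l)"
      using assms(1) that by (simp add: sum.distrib[symmetric] scaleR_add_left)
    then show ?thesis
      using assms(2) psd2_trace_real by (simp add: trace_sum_scaleR cong: sum.cong)
  qed
  then have "(\<Sum>y<n. trace (rho y Out0 + rho y Out1))
      = of_real (\<Sum>y<n. \<Sum>l\<in>L. (p Out0 y l + p Out1 y l) * Re (trace (\<sigma> l)))"
    by simp
  then show ?thesis
    unfolding T_n_def
    by (simp add: sum.swap[of _ L] sum_divide_distrib sum_distrib_left sum_distrib_right mult_ac)
qed

lemma outcome_probability_bounds:
  fixes P :: "outcome \<Rightarrow> real"
  assumes "(\<forall>b. 0 \<le> P b) \<and> P Out0 + P Out1 + P OutNull = 1"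
  shows "\<bar>P Out0 - P Out1\<bar> \<le> P Out0 + P Out1" "0 \<le> P Out0 + P Out1" "P Out0 + P Out1 \<le> 1"
proof -
  have "0 \<le> P Out0" "0 \<le> P Out1" "0 \<le> P OutNull" using assms by auto
  then show "\<bar>P Out0 - P Out1\<bar> \<le> P Out0 + P Out1" "0 \<le> P Out0 + P Out1" "P Out0 + P Out1 \<le> 1"
    using assms by linarith+
qed

lemma cmod_W_n_le_sum_hidden_states:
  assumes n: "n \<ge> 1"
    and decomposition: "\<forall>y<n. \<forall>b. rho y b = (\<Sum>l\<in>L. p b y l *\<^sub>R \<sigma> l)"
    and psd: "\<forall>l\<in>L. psd2 (\<sigma> l)"
    and prob: "\<forall>y<n. \<forall>l\<in>L. (\<forall>b. p b y l \<ge> 0) \<and> p Out0 y l + p Out1 y l + p OutNull y l = 1"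
  shows "cmod (W_n n rho) \<le> (\<Sum>l\<in>L. Re (trace (\<sigma> l)) * sin (pi/2 * ((\<Sum>y<n. p Out0 y l + p Out1 y l) / real n)))
           / (real n * sin (pi / (2 * real n)))"
proof -
  define s where "s = sin (pi / (2 * real n))"
  define A where "A l = (\<Sum>y<n. (p Out0 y l - p Out1 y l) * Re (trace (pauli_axis (theta n y) ** \<sigma> l)))" for l
  define B where "B l = sin (pi/2 * ((\<Sum>y<n. p Out0 y l + p Out1 y l) / real n))" for l
  have A_le: "\<bar>A l\<bar> \<le> Re (trace (\<sigma> l)) * (B l / s)" if "l \<in> L" for l
  proof -
    have "\<bar>p Out0 y l - p Out1 y l\<bar> \<le> p Out0 y l + p Out1 y l \<and> p Out0 y l + p Out1 y l \<le> 1"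
      if "y < n" for y
      using outcome_probability_bounds[OF prob[rule_format, OF \<open>y < n\<close> \<open>l \<in> L\<close>]] by blast
    then show ?thesis
      using abs_sum_trace_pauli_axis_le[of "\<sigma> l" n "\<lambda>y. p Out0 y l - p Out1 y l" "\<lambda>y. p Out0 y l + p Out1 y l"]
        psd n that
      unfolding A_def B_def s_def by simp
  qed
  have "cmod (W_n n rho) = \<bar>(\<Sum>l\<in>L. A l) / real n\<bar>"
    unfolding W_n_eq_sum_hidden_states[OF decomposition psd] norm_of_real A_def ..
  also have "\<dots> \<le> (\<Sum>l\<in>L. \<bar>A l\<bar>) / real n"
    using sum_abs[of A L] by (simp add: divide_right_mono)
  also have "\<dots> \<le> (\<Sum>l\<in>L. Re (trace (\<sigma> l)) * (B l / s)) / real n"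
    using A_le by (intro divide_right_mono sum_mono) auto
  also have "\<dots> = (\<Sum>l\<in>L. Re (trace (\<sigma> l)) * B l) / (real n * s)"
    by (simp add: sum_divide_distrib mult.commute)
  finally show ?thesis unfolding B_def s_def .
qed

theorem mainTheorem8:
  fixes n :: nat and rho :: "nat \<Rightarrow> outcome \<Rightarrow> cmat2"
  assumes "n \<ge> 1" and "LHS_assemblage n rho"
  shows "cmod (W_n n rho) \<le> sin (pi / 2 * Re (T_n n rho)) / (real n * sin (pi / (2 * real n)))"
proof -
  obtain L :: "nat set" and \<sigma> p where "finite L" and psd: "\<forall>l\<in>L. psd2 (\<sigma> l)" and trace_one: "(\<Sum>l\<in>L. trace (\<sigma> l)) = 1"
    and prob: "\<forall>y<n. \<forall>l\<in>L. (\<forall>b. p b y l \<ge> 0) \<and> p Out0 y l + p Out1 y l + p OutNull y l = 1"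
    and decomposition: "\<forall>y<n. \<forall>b. rho y b = (\<Sum>l\<in>L. p b y l *\<^sub>R \<sigma> l)"
    using assms(2) unfolding LHS_assemblage_def by blast
  define t where "t l = Re (trace (\<sigma> l))" for l
  define T where "T l = (\<Sum>y<n. p Out0 y l + p Out1 y l) / real n" for l
  have t_nonneg: "0 \<le> t l" if "l \<in> L" for l
    using psd that order.trans[OF norm_ge_zero psd2_bloch_vector_le_trace] unfolding t_def by blast
  have t_sum: "(\<Sum>l\<in>L. t l) = 1" using arg_cong[OF trace_one, of Re] unfolding t_def by simp
  have T_range: "T l \<in> {0..1}" if "l \<in> L" for l
    unfolding T_def using outcome_probability_bounds(2,3)[OF prob[rule_format, OF _ that]]
    by (intro average_in_unit_interval[OF assms(1)]) auto
  have "L \<noteq> {}" using t_sum by auto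
  have "cmod (W_n n rho) \<le> (\<Sum>l\<in>L. t l * sin (pi/2 * T l)) / (real n * sin (pi / (2 * real n)))"
    using cmod_W_n_le_sum_hidden_states[OF assms(1) decomposition psd prob] unfolding t_def T_def .
  also have "\<dots> \<le> sin (pi/2 * (\<Sum>l\<in>L. t l *\<^sub>R T l)) / (real n * sin (pi / (2 * real n)))"
    using concave_on_sum[OF \<open>finite L\<close> \<open>L \<noteq> {}\<close> concave_on_sin_half_pi t_sum t_nonneg T_range]
      assms(1) sin_gt_zero[of "pi / (2 * real n)"]
    by (intro divide_right_mono) (auto simp: divide_less_eq)
  also have "(\<Sum>l\<in>L. t l *\<^sub>R T l) = Re (T_n n rho)"
    using Re_T_n_eq_sum_hidden_states[OF decomposition psd] unfolding t_def T_def by simp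
  finally show ?thesis .
qed

end
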